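(* Let $M$ be a Hausdorff topological abelian group. Let $f\colon[0,\infty)^n\to M$ be a function that in each variable (with the other variables fixed) is a continuous semigroup homomorphism $([0,\infty),+)\to M$. Then for any $i\neq j$ and any $a,\lambda_1,\ldots,\lambda_n\in[0,\infty)$, \[f(\lambda_1,\ldots,a\lambda_i,\ldots,\lambda_n)=f(\lambda_1,\ldots,a\lambda_j,\ldots,\lambda_n),\] where on the left $\lambda_i$ is replaced by $a\lambda_i$ and on the right $\lambda_j$ is replaced by $a\lambda_j$. Consequently $f(\lambda_1,\ldots,\lambda_n)=g(\lambda_1\cdots\lambda_n)$, where $g\colon[0,\infty)\to M$ is the homomorphism $g(\lambda)=f(\lambda,1,\ldots,1)$. *)

theory Defs
  imports "HOL-Analysis.Analysis"
begin

definition nonneg_orthant :: "nat \<Rightarrow> real list set" where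
  "nonneg_orthant n = {xs. length xs = n \<and> (\<forall>x\<in>set xs. 0 \<le> x)}"

end

theory Submission
  imports Defs
begin

text \<open>If \<open>F\<close> is additive and continuous in each of two variables on \<open>[0,\<infinity>)\<close>, then
\<open>F (p/q * s) t\<close> and \<open>F s (p/q * t)\<close> both equal \<open>p\<close> copies of \<open>F s (t/q)\<close>; by continuity
\<open>F (a * s) t = F s (a * t)\<close> for every \<open>a \<ge> 0\<close>. Applied to two coordinates of \<open>f\<close>, this lets a
factor migrate from one coordinate to another, so all coordinates can be multiplied into
the first one, leaving \<open>1\<close> everywhere else.\<close>

lemma additive_nonneg_of_nat_mult:
  fixes g :: "real \<Rightarrow> 'a::cancel_comm_monoid_add"
  assumes add: "\<And>s t. 0 \<le> s \<Longrightarrow> 0 \<le> t \<Longrightarrow> g (s + t) = g s + g t"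
    and x: "0 \<le> x"
  shows "g (real k * x) = (\<Sum>_<k. g x)"
proof (induction k)
  case 0
  have "g 0 = g 0 + g 0" using add[of 0 0] by simp
  then show ?case by simp
next
  case (Suc k)
  have "g (real (Suc k) * x) = g (real k * x + x)" by (simp add: algebra_simps)
  also have "\<dots> = g (real k * x) + g x" using add x by simp
  finally show ?case using Suc by simp
qed

lemma continuous_on_nonneg_eq_if_eq_on_Rats:
  fixes g h :: "real \<Rightarrow> 'a::t2_space"
  assumes g: "continuous_on {0..} g" and h: "continuous_on {0..} h"
    and eq: "\<And>p q :: nat. 0 < q \<Longrightarrow> g (real p / real q) = h (real p / real q)"
    and x: "0 \<le> x"
  shows "g x = h x"
proof -
  define G where "G = g \<circ> max 0"
  define H where "H = h \<circ> max 0"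
  have "continuous_on UNIV G" unfolding G_def comp_def
    by (rule continuous_on_compose2[OF g]) (auto intro!: continuous_intros)
  moreover have "continuous_on UNIV H" unfolding H_def comp_def
    by (rule continuous_on_compose2[OF h]) (auto intro!: continuous_intros)
  ultimately have closed: "closed {x. G x = H x}" by (rule closed_Collect_eq)
  have "\<rat> \<subseteq> {x. G x = H x}"
  proof
    fix r :: real assume "r \<in> \<rat>"
    then obtain u v where v: "0 < v" and r: "r = of_int u / of_int v"
      by (rule Rats_cases') blast
    show "r \<in> {x. G x = H x}"
    proof (cases "0 \<le> r")
      case False
      then show ?thesis using eq[of 1 0] by (simp add: G_def H_def)
    next
      case True
      then have "0 \<le> u" using v r by (simp add: zero_le_divide_iff)
      then have "r = real (nat u) / real (nat v)" using r v by simp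
      then show ?thesis using eq[of "nat v" "nat u"] True v by (simp add: G_def H_def)
    qed
  qed
  then have "closure \<rat> \<subseteq> {x. G x = H x}" using closed by (rule closure_minimal)
  then have "G x = H x" using Rats_closure_real by auto
  then show ?thesis using x by (simp add: G_def H_def max_absorb2)
qed

lemma biadditive_scale_swap:
  fixes F :: "real \<Rightarrow> real \<Rightarrow> 'a::{cancel_comm_monoid_add, t2_space}"
  assumes add1: "\<And>s1 s2 t. 0 \<le> s1 \<Longrightarrow> 0 \<le> s2 \<Longrightarrow> 0 \<le> t \<Longrightarrow> F (s1 + s2) t = F s1 t + F s2 t"
    and add2: "\<And>s t1 t2. 0 \<le> s \<Longrightarrow> 0 \<le> t1 \<Longrightarrow> 0 \<le> t2 \<Longrightarrow> F s (t1 + t2) = F s t1 + F s t2"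
    and cont1: "\<And>t. 0 \<le> t \<Longrightarrow> continuous_on {0..} (\<lambda>s. F s t)"
    and cont2: "\<And>s. 0 \<le> s \<Longrightarrow> continuous_on {0..} (\<lambda>t. F s t)"
    and s: "0 \<le> s" and t: "0 \<le> t" and a: "0 \<le> a"
  shows "F (a * s) t = F s (a * t)"
proof (rule continuous_on_nonneg_eq_if_eq_on_Rats[OF _ _ _ a])
  show "continuous_on {0..} (\<lambda>a. F (a * s) t)"
    by (rule continuous_on_compose2[OF cont1[OF t]]) (auto intro!: continuous_intros simp: s)
  show "continuous_on {0..} (\<lambda>a. F s (a * t))"
    by (rule continuous_on_compose2[OF cont2[OF s]]) (auto intro!: continuous_intros simp: t)
next
  fix p q :: nat assume q: "0 < q"
  have tq: "0 \<le> t / real q" using t by simp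
  have ps: "0 \<le> real p / real q * s" using s by simp
  have "F (real p / real q * s) t = F (real p / real q * s) (real q * (t / real q))"
    using q by simp
  also have "\<dots> = (\<Sum>_<q. F (real p / real q * s) (t / real q))"
    by (rule additive_nonneg_of_nat_mult[OF add2[OF ps] tq])
  also have "\<dots> = F (real q * (real p / real q * s)) (t / real q)"
    by (rule additive_nonneg_of_nat_mult[OF add1[OF _ _ tq] ps, symmetric])
  also have "\<dots> = F (real p * s) (t / real q)" using q by simp
  also have "\<dots> = (\<Sum>_<p. F s (t / real q))"
    by (rule additive_nonneg_of_nat_mult[OF add1[OF _ _ tq] s])
  also have "\<dots> = F s (real p * (t / real q))"
    by (rule additive_nonneg_of_nat_mult[OF add2[OF s] tq, symmetric])
  finally show "F (real p / real q * s) t = F s (real p / real q * t)" by simp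
qed

lemma nonneg_orthant_update:
  "xs \<in> nonneg_orthant n \<Longrightarrow> 0 \<le> t \<Longrightarrow> xs[k := t] \<in> nonneg_orthant n"
  unfolding nonneg_orthant_def using set_update_subset_insert by fastforce

lemma nonneg_orthant_nth: "xs \<in> nonneg_orthant n \<Longrightarrow> k < n \<Longrightarrow> 0 \<le> xs ! k"
  unfolding nonneg_orthant_def by auto

locale separately_additive =
  fixes f :: "real list \<Rightarrow> 'a::{cancel_comm_monoid_add, t2_space}"
    and n :: nat
  assumes cont: "\<And>xs i. xs \<in> nonneg_orthant n \<Longrightarrow> i < n \<Longrightarrow>
              continuous_on {0..} (\<lambda>t. f (xs[i := t]))"
    and hom: "\<And>xs i s t. xs \<in> nonneg_orthant n \<Longrightarrow> i < n \<Longrightarrow> 0 \<le> s \<Longrightarrow> 0 \<le> t \<Longrightarrow>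
              f (xs[i := s + t]) = f (xs[i := s]) + f (xs[i := t])"
begin

lemma scale_swap:
  assumes xs: "xs \<in> nonneg_orthant n" and i: "i < n" and j: "j < n" and "i \<noteq> j"
    and a: "0 \<le> a"
  shows "f (xs[i := a * xs ! i]) = f (xs[j := a * xs ! j])"
proof -
  define F where "F = (\<lambda>s t. f (xs[i := s, j := t]))"
  have swap: "xs[i := s, j := t] = xs[j := t, i := s]" for s t
    using \<open>i \<noteq> j\<close> by (simp add: list_update_swap)
  have "F (a * xs ! i) (xs ! j) = F (xs ! i) (a * xs ! j)"
  proof (rule biadditive_scale_swap)
    show "F (s1 + s2) t = F s1 t + F s2 t" if "0 \<le> s1" "0 \<le> s2" "0 \<le> t" for s1 s2 t
      unfolding F_def swap using hom[OF nonneg_orthant_update[OF xs \<open>0 \<le> t\<close>] i] that by simp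
    show "F s (t1 + t2) = F s t1 + F s t2" if "0 \<le> s" "0 \<le> t1" "0 \<le> t2" for s t1 t2
      unfolding F_def using hom[OF nonneg_orthant_update[OF xs \<open>0 \<le> s\<close>] j] that by simp
    show "continuous_on {0..} (\<lambda>s. F s t)" if "0 \<le> t" for t
      unfolding F_def swap using cont[OF nonneg_orthant_update[OF xs that] i] by simp
    show "continuous_on {0..} (\<lambda>t. F s t)" if "0 \<le> s" for s
      unfolding F_def using cont[OF nonneg_orthant_update[OF xs that] j] by simp
  qed (use nonneg_orthant_nth[OF xs i] nonneg_orthant_nth[OF xs j] a in auto)
  then show ?thesis unfolding F_def using swap by simp
qed

lemma merge_coordinates:
  assumes xs: "xs \<in> nonneg_orthant n" and i: "i < n" and j: "j < n" and "i \<noteq> j"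
  shows "f xs = f (xs[i := xs ! j * xs ! i, j := 1])"
proof -
  let ?ys = "xs[j := 1]"
  have ys: "?ys \<in> nonneg_orthant n" using nonneg_orthant_update[OF xs] by simp
  have len: "length xs = n" using xs by (simp add: nonneg_orthant_def)
  have "f (?ys[j := xs ! j * ?ys ! j]) = f (?ys[i := xs ! j * ?ys ! i])"
    using scale_swap[OF ys j i _ nonneg_orthant_nth[OF xs j]] \<open>i \<noteq> j\<close> by simp
  then show ?thesis using i j len \<open>i \<noteq> j\<close> by (simp add: list_update_swap)
qed

lemma eq_prod_list_replicate_one:
  assumes "Suc (m + length ys) = n" and "0 \<le> x" and "\<forall>y\<in>set ys. 0 \<le> y"
  shows "f (x # replicate m 1 @ ys) = f (x * prod_list ys # replicate (m + length ys) 1)"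
  using assms
proof (induction ys arbitrary: x m)
  case Nil
  then show ?case by simp
next
  case (Cons y ys)
  let ?xs = "x # replicate m 1 @ y # ys"
  have xs: "?xs \<in> nonneg_orthant n" using Cons.prems by (auto simp: nonneg_orthant_def)
  have "f ?xs = f (?xs[0 := ?xs ! Suc m * ?xs ! 0, Suc m := 1])"
    using merge_coordinates[OF xs, of 0 "Suc m"] Cons.prems(1) by simp
  also have "\<dots> = f (y * x # replicate (Suc m) 1 @ ys)"
    by (simp add: nth_append list_update_append replicate_append_same[symmetric])
  also have "\<dots> = f (x * prod_list (y # ys) # replicate (m + length (y # ys)) 1)"
    using Cons.IH[of "Suc m" "y * x"] Cons.prems by (simp add: mult_ac)
  finally show ?case .
qed

end

theorem proposition3p7:
  fixes f :: "real list \<Rightarrow> 'm::{topological_group_add, ab_group_add, t2_space}"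
    and n :: nat
  assumes cont: "\<And>xs i. xs \<in> nonneg_orthant n \<Longrightarrow> i < n \<Longrightarrow>
              continuous_on {0..} (\<lambda>t. f (xs[i := t]))"
    and hom: "\<And>xs i s t. xs \<in> nonneg_orthant n \<Longrightarrow> i < n \<Longrightarrow> 0 \<le> s \<Longrightarrow> 0 \<le> t \<Longrightarrow>
              f (xs[i := s + t]) = f (xs[i := s]) + f (xs[i := t])"
  shows "(\<forall>xs\<in>nonneg_orthant n. \<forall>i<n. \<forall>j<n. \<forall>a\<ge>0. i \<noteq> j \<longrightarrow>
           f (xs[i := a * xs ! i]) = f (xs[j := a * xs ! j])) \<and>
         (n \<ge> 1 \<longrightarrow> (\<forall>xs\<in>nonneg_orthant n.
           f xs = f (prod_list xs # replicate (n - 1) 1)))"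
proof -
  interpret separately_additive f n using cont hom by unfold_locales
  have "f xs = f (prod_list xs # replicate (n - 1) 1)"
    if "1 \<le> n" and xs: "xs \<in> nonneg_orthant n" for xs
  proof -
    obtain x ys where "xs = x # ys" "Suc (length ys) = n"
      using xs \<open>1 \<le> n\<close> by (cases xs) (auto simp: nonneg_orthant_def)
    then show ?thesis
      using eq_prod_list_replicate_one[of 0 ys x] xs by (auto simp: nonneg_orthant_def)
  qed
  then show ?thesis using scale_swap by blast
qed

end
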